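(* The matrix $\mathbb G(1)$ is a unitary operator on $\ell^2$ of the set of oriented edges of $\mathcal B$, i.e. on the space of $X=\sum_{\vec A}x_{\vec A}\delta_{\vec A}$ with norm $\|X\|^2=\sum_{\vec A}|x_{\vec A}|^2$.
   Context: $\mathcal B$ is the $2$-regular Bethe lattice: the infinite tree in which every node has exactly $3$ neighbours; each edge has two orientations, $-\vec A$ being the opposite of $\vec A$; write $\vec A\to\vec B$ when the terminal node of $\vec A$ equals the initial node of $\vec B$. $\mathbb G(1)$ is the matrix indexed by oriented edges with entries $\mathbb G(1)_{\vec B,\vec A}=-1/3$ if $\vec B=-\vec A$, $2/3$ if $\vec A\to\vec B$ and $\vec B\ne-\vec A$, and $0$ otherwise (it is the time-one propagator of Dirac masses for the wave equation with Kirchhoff conditions on $\mathcal B$). *)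

theory Defs
  imports "HOL-Analysis.Analysis"
begin

text \<open>Concrete model of the 2-regular Bethe lattice (infinite 3-regular tree):
  the Cayley graph of the free product of three copies of Z/2Z.\<close>

definition bethe_node :: "nat list \<Rightarrow> bool" where
  "bethe_node w \<longleftrightarrow> (\<forall>a\<in>set w. a < 3) \<and> successively (\<noteq>) w"

definition bethe_adj :: "nat list \<Rightarrow> nat list \<Rightarrow> bool" where
  "bethe_adj v w \<longleftrightarrow> bethe_node v \<and> bethe_node w \<and>
     (\<exists>a. w = v @ [a] \<or> v = w @ [a])"

type_synonym oedge = "nat list \<times> nat list"

definition oriented_edges :: "oedge set" where
  "oriented_edges = {(v, w). bethe_adj v w}"

definition opp :: "oedge \<Rightarrow> oedge" where
  "opp A = (snd A, fst A)"

definition feeds :: "oedge \<Rightarrow> oedge \<Rightarrow> bool" where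
  "feeds A B \<longleftrightarrow> snd A = fst B"

definition G1 :: "oedge \<Rightarrow> oedge \<Rightarrow> complex" where
  "G1 B A = (if B = opp A then - 1 / 3
             else if feeds A B \<and> B \<noteq> opp A then 2 / 3 else 0)"

definition l2_edges :: "(oedge \<Rightarrow> complex) set" where
  "l2_edges = {x. (\<forall>e. e \<notin> oriented_edges \<longrightarrow> x e = 0) \<and>
                  (\<lambda>e. (cmod (x e))\<^sup>2) summable_on oriented_edges}"

definition l2_norm_sq :: "(oedge \<Rightarrow> complex) \<Rightarrow> real" where
  "l2_norm_sq x = (\<Sum>\<^sub>\<infinity>e\<in>oriented_edges. (cmod (x e))\<^sup>2)"

definition G1_op :: "(oedge \<Rightarrow> complex) \<Rightarrow> (oedge \<Rightarrow> complex)" where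
  "G1_op x = (\<lambda>B. if B \<in> oriented_edges
                   then (\<Sum>\<^sub>\<infinity>A\<in>oriented_edges. G1 B A * x A) else 0)"

end

theory Submission
  imports Defs
begin

text \<open>At a node v with neighbourhood N, G(1) sends the incoming amplitudes x(u,v), u in N,
  to the outgoing amplitudes (2/3) (sum of the x(u,v)) - x(w,v), w in N. Since card N = 3, this
  is the reflection 2P - I in the line of constant vectors (P the orthogonal projection onto
  it): it preserves the local \<ell>2 norm and is an involution. Every oriented edge is incoming at
  exactly one node and outgoing at exactly one node, so summing the local identities over the
  nodes gives the isometry, and reversing the edges before and after G(1) inverts it.\<close>

definition diagonal_reflection :: "'a set \<Rightarrow> ('a \<Rightarrow> 'b::real_vector) \<Rightarrow> 'a \<Rightarrow> 'b" where
  "diagonal_reflection N x w = (2 / real (card N)) *\<^sub>R (\<Sum>u\<in>N. x u) - x w"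

lemma sum_diagonal_reflection:
  assumes "finite N" "N \<noteq> {}"
  shows "(\<Sum>w\<in>N. diagonal_reflection N x w) = (\<Sum>w\<in>N. x w)"
proof -
  have "real (card N) \<noteq> 0" using assms by simp
  then show ?thesis
    by (simp add: diagonal_reflection_def sum_subtractf sum_constant_scaleR scaleR_2)
qed

lemma diagonal_reflection_involution:
  assumes "finite N" "N \<noteq> {}"
  shows "diagonal_reflection N (diagonal_reflection N x) w = x w"
  using sum_diagonal_reflection[OF assms, of x]
  by (simp add: diagonal_reflection_def[of N "diagonal_reflection N x"] diagonal_reflection_def[of N x])

lemma diagonal_reflection_cong:
  assumes "\<And>u. u \<in> N \<Longrightarrow> x u = x' u" and "w \<in> N"
  shows "diagonal_reflection N x w = diagonal_reflection N x' w"
  using assms unfolding diagonal_reflection_def by (metis sum.cong)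

lemma sum_norm_diagonal_reflection:
  fixes x :: "'a \<Rightarrow> 'b::real_inner"
  assumes "finite N"
  shows "(\<Sum>w\<in>N. (norm (diagonal_reflection N x w))\<^sup>2) = (\<Sum>w\<in>N. (norm (x w))\<^sup>2)"
proof (cases "N = {}")
  case False
  define n where "n = real (card N)"
  define S where "S = (\<Sum>u\<in>N. x u)"
  have n: "n > 0" using assms False by (simp add: n_def card_gt_0_iff)
  have "(\<Sum>w\<in>N. (norm (diagonal_reflection N x w))\<^sup>2)
      = (\<Sum>w\<in>N. (2 / n)\<^sup>2 * (S \<bullet> S) - 2 * (2 / n) * (S \<bullet> x w) + (norm (x w))\<^sup>2)"
    by (intro sum.cong refl, unfold diagonal_reflection_def power2_norm_eq_inner)
      (simp add: n_def S_def inner_diff_left inner_diff_right inner_commute power2_eq_square)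
  also have "\<dots> = n * (2 / n)\<^sup>2 * (S \<bullet> S) - 2 * (2 / n) * (S \<bullet> S) + (\<Sum>w\<in>N. (norm (x w))\<^sup>2)"
  proof -
    have "(\<Sum>w\<in>N. S \<bullet> x w) = S \<bullet> S" by (simp add: S_def inner_sum_right)
    then show ?thesis
      by (simp only: sum.distrib sum_subtractf sum_constant flip: sum_distrib_left) (simp add: n_def)
  qed
  also have "\<dots> = (\<Sum>w\<in>N. (norm (x w))\<^sup>2)"
    using n by (simp add: power2_eq_square)
  finally show ?thesis .
qed simp

lemma has_sum_Sigma_fibrewise:
  fixes f g :: "'a \<times> 'b \<Rightarrow> real"
  assumes fin: "\<And>a. a \<in> A \<Longrightarrow> finite (B a)"
    and nonneg: "\<And>a b. a \<in> A \<Longrightarrow> b \<in> B a \<Longrightarrow> f (a, b) \<ge> 0"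
    and fibre: "\<And>a. a \<in> A \<Longrightarrow> (\<Sum>b\<in>B a. f (a, b)) = (\<Sum>b\<in>B a. g (a, b))"
    and g: "(g has_sum s) (Sigma A B)"
  shows "(f has_sum s) (Sigma A B)"
proof -
  let ?h = "\<lambda>a. \<Sum>b\<in>B a. g (a, b)"
  have f_fibre: "((\<lambda>b. f (a, b)) has_sum ?h a) (B a)" if "a \<in> A" for a
    using fibre[OF that] has_sum_finite[OF fin[OF that]] by metis
  have "(?h has_sum s) A"
    using g by (rule has_sum_SigmaD) (use fin has_sum_finite in blast)
  moreover from this have "f summable_on Sigma A B"
    using f_fibre nonneg by (intro summable_on_SigmaI) (auto dest: has_sum_imp_summable)
  ultimately show ?thesis
    using f_fibre by (intro has_sum_SigmaI)
qed

definition bethe_nbrs :: "nat list \<Rightarrow> nat list set" where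
  "bethe_nbrs v = {w. bethe_adj v w}"

lemma bethe_adj_sym: "bethe_adj v w \<longleftrightarrow> bethe_adj w v"
  unfolding bethe_adj_def by blast

lemma bethe_node_snoc:
  "bethe_node (u @ [a]) \<longleftrightarrow> bethe_node u \<and> a < 3 \<and> (u = [] \<or> last u \<noteq> a)"
  unfolding bethe_node_def by (auto simp: successively_append_iff)

lemma bethe_nbrs_Nil: "bethe_nbrs [] = {[0], [1], [2]}"
  unfolding bethe_nbrs_def bethe_adj_def by (auto simp: bethe_node_snoc bethe_node_def)

lemma bethe_nbrs_snoc:
  assumes "bethe_node (u @ [a])"
  shows "bethe_nbrs (u @ [a]) = insert u {u @ [a, b] | b. b < 3 \<and> b \<noteq> a}"
proof -
  have "bethe_node (u @ [a, b]) \<longleftrightarrow> bethe_node (u @ [a]) \<and> b < 3 \<and> b \<noteq> a" for b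
    using bethe_node_snoc[of "u @ [a]" b] by auto
  with assms show ?thesis
    unfolding bethe_nbrs_def bethe_adj_def
    by (auto simp: bethe_node_snoc[of "u @ [a]"] bethe_node_snoc[of u] simp del: append_assoc)
qed

lemma card_bethe_nbrs:
  assumes "bethe_node v"
  shows "finite (bethe_nbrs v)" and "card (bethe_nbrs v) = 3"
proof -
  have "finite (bethe_nbrs v) \<and> card (bethe_nbrs v) = 3"
  proof (cases v rule: rev_cases)
    case Nil
    then show ?thesis by (simp add: bethe_nbrs_Nil)
  next
    case (snoc u a)
    have "a < 3" using assms snoc by (simp add: bethe_node_snoc)
    then have "{u @ [a, b] | b. b < 3 \<and> b \<noteq> a} =
        (if a = 0 then {u @ [a, 1], u @ [a, 2]} else if a = 1 then {u @ [a, 0], u @ [a, 2]}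
         else {u @ [a, 0], u @ [a, 1]})"
      by (auto; presburger)
    then show ?thesis
      using assms \<open>a < 3\<close> unfolding snoc bethe_nbrs_snoc[OF assms[unfolded snoc]] by auto
  qed
  then show "finite (bethe_nbrs v)" and "card (bethe_nbrs v) = 3" by blast+
qed

lemma oriented_edges_Sigma: "oriented_edges = Sigma {v. bethe_node v} bethe_nbrs"
  unfolding oriented_edges_def bethe_nbrs_def bethe_adj_def by auto

lemma opp_in_oriented_edges_iff: "opp e \<in> oriented_edges \<longleftrightarrow> e \<in> oriented_edges"
  unfolding oriented_edges_def opp_def by (cases e) (simp add: bethe_adj_sym)

lemma bij_betw_opp: "bij_betw opp oriented_edges oriented_edges"
  by (rule bij_betwI[of _ _ _ opp]) (auto simp: opp_def oriented_edges_def bethe_adj_sym)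

lemma comp_opp_in_l2_edges:
  assumes "x \<in> l2_edges"
  shows "x \<circ> opp \<in> l2_edges"
proof -
  have "(x \<circ> opp) e = 0" if "e \<notin> oriented_edges" for e
    using assms that opp_in_oriented_edges_iff[of e] by (simp add: l2_edges_def del: split_paired_All)
  moreover have "(\<lambda>e. (cmod (x (opp e)))\<^sup>2) summable_on oriented_edges"
    using assms summable_on_reindex_bij_betw[OF bij_betw_opp, of "\<lambda>e. (cmod (x e))\<^sup>2"]
    by (simp add: l2_edges_def)
  ultimately show ?thesis by (simp add: l2_edges_def)
qed

lemma G1_op_diagonal_reflection:
  assumes vw: "bethe_adj v w"
  shows "G1_op x (v, w) = diagonal_reflection (bethe_nbrs v) (\<lambda>u. x (u, v)) w"
proof -
  let ?N = "bethe_nbrs v"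
  let ?S = "(\<lambda>u. (u, v)) ` ?N"
  have node: "bethe_node v" using vw bethe_adj_def by blast
  note fin = card_bethe_nbrs(1)[OF node] and card = card_bethe_nbrs(2)[OF node]
  have w: "w \<in> ?N" using vw by (simp add: bethe_nbrs_def)
  have "(\<Sum>\<^sub>\<infinity>A\<in>oriented_edges. G1 (v, w) A * x A) = (\<Sum>\<^sub>\<infinity>A\<in>?S. G1 (v, w) A * x A)"
  proof (rule infsum_cong_neutral)
    fix A assume A: "A \<in> oriented_edges - ?S"
    obtain a b where ab: "A = (a, b)" by fastforce
    have "G1 (v, w) A = 0"
    proof (cases "b = v")
      case True
      then show ?thesis
        using A ab by (auto simp: oriented_edges_def bethe_nbrs_def bethe_adj_sym)
    qed (simp add: G1_def ab opp_def feeds_def)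
    then show "G1 (v, w) A * x A = 0" by simp
  qed (auto simp: oriented_edges_def bethe_nbrs_def bethe_adj_sym)
  also have "\<dots> = (\<Sum>u\<in>?N. G1 (v, w) (u, v) * x (u, v))"
    using fin by (simp add: sum.reindex inj_on_def)
  also have "\<dots> = (\<Sum>u\<in>?N. 2/3 * x (u, v) - (if u = w then x (u, v) else 0))"
    by (rule sum.cong) (auto simp: G1_def opp_def feeds_def)
  also have "\<dots> = diagonal_reflection ?N (\<lambda>u. x (u, v)) w"
    using fin w card
    by (simp add: diagonal_reflection_def sum_subtractf sum_distrib_left scaleR_conv_of_real)
  finally show ?thesis
    using vw by (simp add: G1_op_def oriented_edges_def)
qed

lemma has_sum_norm_G1_op:
  assumes x: "x \<in> l2_edges"
  shows "((\<lambda>e. (cmod (G1_op x e))\<^sup>2) has_sum l2_norm_sq x) oriented_edges"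
proof -
  let ?g = "\<lambda>e. (cmod (x (opp e)))\<^sup>2"
  have "((\<lambda>e. (cmod (x e))\<^sup>2) has_sum l2_norm_sq x) oriented_edges"
    using x by (simp add: l2_edges_def l2_norm_sq_def)
  then have g: "(?g has_sum l2_norm_sq x) (Sigma {v. bethe_node v} bethe_nbrs)"
    unfolding oriented_edges_Sigma[symmetric]
    by (rule has_sum_reindex_bij_betw[OF bij_betw_opp, THEN iffD2])
  have fibre: "(\<Sum>w\<in>bethe_nbrs v. (cmod (G1_op x (v, w)))\<^sup>2) = (\<Sum>w\<in>bethe_nbrs v. ?g (v, w))"
    if v: "v \<in> {v. bethe_node v}" for v
  proof -
    have "(\<Sum>w\<in>bethe_nbrs v. (cmod (G1_op x (v, w)))\<^sup>2)
        = (\<Sum>w\<in>bethe_nbrs v. (norm (diagonal_reflection (bethe_nbrs v) (\<lambda>u. x (u, v)) w))\<^sup>2)"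
      by (intro sum.cong refl) (simp add: G1_op_diagonal_reflection bethe_nbrs_def)
    also have "\<dots> = (\<Sum>w\<in>bethe_nbrs v. ?g (v, w))"
      using v by (simp add: sum_norm_diagonal_reflection card_bethe_nbrs opp_def)
    finally show ?thesis .
  qed
  show ?thesis
    unfolding oriented_edges_Sigma
    by (rule has_sum_Sigma_fibrewise[OF _ _ fibre g]) (simp_all add: card_bethe_nbrs)
qed

lemma G1_op_in_l2_edges:
  assumes "x \<in> l2_edges"
  shows "G1_op x \<in> l2_edges" and "l2_norm_sq (G1_op x) = l2_norm_sq x"
proof -
  note has_sum = has_sum_norm_G1_op[OF assms]
  have "G1_op x e = 0" if "e \<notin> oriented_edges" for e
    using that by (simp add: G1_op_def)
  with has_sum_imp_summable[OF has_sum] show "G1_op x \<in> l2_edges"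
    by (simp add: l2_edges_def)
  show "l2_norm_sq (G1_op x) = l2_norm_sq x"
    unfolding l2_norm_sq_def[of "G1_op x"] using has_sum by (rule infsumI)
qed

lemma G1_op_G1_op_opp:
  assumes y: "y \<in> l2_edges"
  shows "G1_op (G1_op (y \<circ> opp) \<circ> opp) = y"
proof
  fix e
  show "G1_op (G1_op (y \<circ> opp) \<circ> opp) e = y e"
  proof (cases "e \<in> oriented_edges")
    case False
    then show ?thesis using y by (simp add: G1_op_def l2_edges_def del: split_paired_All)
  next
    case True
    then obtain v w where e: "e = (v, w)" and vw: "bethe_adj v w"
      by (auto simp: oriented_edges_def)
    let ?N = "bethe_nbrs v"
    have node: "bethe_node v" using vw bethe_adj_def by blast
    have "(G1_op (y \<circ> opp) \<circ> opp) (u, v) = diagonal_reflection ?N (\<lambda>t. y (v, t)) u"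
      if "u \<in> ?N" for u
      using that by (simp add: G1_op_diagonal_reflection bethe_nbrs_def opp_def)
    then have "G1_op (G1_op (y \<circ> opp) \<circ> opp) (v, w)
        = diagonal_reflection ?N (diagonal_reflection ?N (\<lambda>t. y (v, t))) w"
      using vw unfolding G1_op_diagonal_reflection[OF vw]
      by (intro diagonal_reflection_cong) (simp_all add: bethe_nbrs_def)
    also have "\<dots> = y (v, w)"
      using card_bethe_nbrs[OF node] by (intro diagonal_reflection_involution) auto
    finally show ?thesis unfolding e .
  qed
qed

theorem lemma1:
  shows "(\<forall>x\<in>l2_edges. G1_op x \<in> l2_edges \<and> l2_norm_sq (G1_op x) = l2_norm_sq x) \<and>
         (\<forall>y\<in>l2_edges. \<exists>x\<in>l2_edges. G1_op x = y)"
proof (rule conjI; intro ballI)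
  fix x assume "x \<in> l2_edges"
  then show "G1_op x \<in> l2_edges \<and> l2_norm_sq (G1_op x) = l2_norm_sq x"
    by (simp add: G1_op_in_l2_edges)
next
  fix y assume y: "y \<in> l2_edges"
  show "\<exists>x\<in>l2_edges. G1_op x = y"
  proof
    show "G1_op (y \<circ> opp) \<circ> opp \<in> l2_edges"
      using y by (intro comp_opp_in_l2_edges G1_op_in_l2_edges(1))
    show "G1_op (G1_op (y \<circ> opp) \<circ> opp) = y"
      using y by (rule G1_op_G1_op_opp)
  qed
qed

end
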